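(* Let $b(x)=\frac14x^4+\frac12px^2+qx$ with $p<0$, $q\in\mathbb{R}$, and $N(\eta,\tau)=\int_{-\infty}^{\infty}e^{2\tau[\eta\lambda-b(\lambda)]}\,d\lambda$. Define, for $(x,y,t),(r,s,u)\in\mathbb{R}^3$, $$\mathcal{S}[(x,y,t),(r,s,u)]=c\int_0^\infty\!\!\int_{-\infty}^\infty\tau\, e^{\tau[i(t-u)+i\eta(y-s)-(b(x)+b(r)-\eta(x+r))]}[N(\eta,\tau)]^{-1}\,d\eta\,d\tau,$$ and for $z,w\in\mathbb{C}^2$ $$S(z,w)=c\iint_{\tau>0}\tau\, e^{\eta\tau[z_1+\bar w_1]+i\tau[z_2-\bar w_2]}[N(\eta,\tau)]^{-1}\,d\eta\,d\tau,$$ with $c>0$ an absolute constant. Suppose $x,r\in\mathbb{R}$ satisfy either ($x=r$ and $|x|>\sqrt{-p}$) or $|x|=|r|=\sqrt{-p}$. Then $\mathcal{S}[(x,0,0),(r,0,0)]=+\infty$ (the integral, whose integrand is non-negative, diverges). Also, for $h,k\in\mathbb{R}$ with $\delta=h+k>0$, $$\lim_{\delta\to0^+}S[(x,\,i(b(x)+h)),(r,\,i(b(r)+k))]=\infty.$$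
   Context: Here $(x,i(b(x)+h))$ denotes the point $(z_1,z_2)=(x+i0,\,0+i(b(x)+h))\in\mathbb{C}^2$. The function $S$ is the Szeg\"o kernel of $\Omega=\{(z_1,z_2):\operatorname{Im}z_2>b(\operatorname{Re}z_1)\}$ and $\mathcal{S}$ is its expression on $\partial\Omega\cong\mathbb{R}^3$. *)

theory Defs
  imports "HOL-Analysis.Analysis"
begin

definition bq :: "real \<Rightarrow> real \<Rightarrow> real \<Rightarrow> real" where
  "bq p q x = x^4 / 4 + p * x^2 / 2 + q * x"

definition Nfun :: "(real \<Rightarrow> real) \<Rightarrow> real \<Rightarrow> real \<Rightarrow> real" where
  "Nfun b \<eta> \<tau> = (LBINT l. exp (2 * \<tau> * (\<eta> * l - b l)))"

definition bdry_integrand ::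
  "(real \<Rightarrow> real) \<Rightarrow> real \<times> real \<times> real \<Rightarrow> real \<times> real \<times> real \<Rightarrow> real \<times> real \<Rightarrow> complex" where
  "bdry_integrand b P Q z = (case P of (x, y, t) \<Rightarrow> case Q of (r, s, u) \<Rightarrow> case z of (\<tau>, \<eta>) \<Rightarrow>
     complex_of_real \<tau> *
     exp (complex_of_real \<tau> * (\<i> * complex_of_real (t - u) + \<i> * complex_of_real (\<eta> * (y - s))
            - complex_of_real (b x + b r - \<eta> * (x + r))))
     / complex_of_real (Nfun b \<eta> \<tau>))"

definition szego ::
  "real \<Rightarrow> (real \<Rightarrow> real) \<Rightarrow> complex \<times> complex \<Rightarrow> complex \<times> complex \<Rightarrow> complex" where
  "szego c b z w = complex_of_real c *
     (LINT v : {v. fst v > 0} | lborel \<Otimes>\<^sub>M lborel.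
        (case v of (\<tau>, \<eta>) \<Rightarrow>
          complex_of_real \<tau> *
          exp (complex_of_real (\<eta> * \<tau>) * (fst z + cnj (fst w))
               + \<i> * complex_of_real \<tau> * (snd z - cnj (snd w)))
          / complex_of_real (Nfun b \<eta> \<tau>)))"

end

theory Submission
  imports Defs
begin

text \<open>
  Write \<open>\<phi>\<^sub>\<eta>(l) = \<eta> l - b(l)\<close>, so that \<open>N(\<eta>,\<tau>) = \<integral> exp (2 \<tau> \<phi>\<^sub>\<eta>)\<close>. At the points in
  question both kernels have the non-negative integrand
  \<open>\<tau> exp (-\<delta> \<tau>) exp (\<tau> (\<phi>\<^sub>\<eta>(x) + \<phi>\<^sub>\<eta>(r))) / N(\<eta>,\<tau>)\<close>,
  with \<open>\<delta> = 0\<close> on the boundary and \<open>\<delta> = h + k\<close> for \<open>S\<close>.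

  The hypothesis on \<open>x, r\<close> says that the chord of the graph of \<open>b\<close> from \<open>x\<close> to \<open>r\<close> is a
  supporting line, of slope \<open>\<eta>\<^sub>0\<close> say (the tangent at \<open>x\<close> if \<open>x = r\<close>, the double tangent of
  slope \<open>q\<close> if \<open>x\<^sup>2 = r\<^sup>2 = -p\<close>). Then for \<open>\<tau> \<ge> 1\<close> and \<open>|\<eta> - \<eta>\<^sub>0| \<le> 1/\<tau>\<close> the integral
  \<open>N(\<eta>,\<tau>)\<close> is at most a constant times \<open>exp (\<tau> (\<phi>\<^sub>\<eta>(x) + \<phi>\<^sub>\<eta>(r)))\<close>, so on this strip of
  width \<open>2/\<tau>\<close> the integrand is at least a multiple of \<open>\<tau> exp (-\<delta> \<tau>)\<close>. Every unit interval of
  \<open>\<tau> \<le> 1/\<delta>\<close> therefore contributes a fixed amount: the boundary integral diverges, and the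
  integral defining \<open>S\<close> grows like \<open>1/\<delta>\<close>. That this integral is finite for \<open>\<delta> > 0\<close> follows
  by bounding \<open>N\<close> from below near the larger of \<open>\<phi>\<^sub>\<eta>(x)\<close> and \<open>\<phi>\<^sub>\<eta>(r)\<close>, which yields an
  integrable majorant.
\<close>

section \<open>Exponential integrals on the real line\<close>

lemma nn_integral_exp_neg_abs_le:
  fixes a :: real
  assumes "a > 0"
  shows "(\<integral>\<^sup>+x. ennreal (exp (- (a * \<bar>x\<bar>))) \<partial>lborel) \<le> ennreal (2 / a)"
proof -
  define g where "g x = ennreal (indicator {0..} x * exp (- a * x))" for x :: real
  have [measurable]: "g \<in> borel_measurable borel"
    unfolding g_def by measurable
  have g: "(\<integral>\<^sup>+x. g x \<partial>lborel) = ennreal (1 / a)"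
    unfolding g_def
    using nn_integral_has_integral_lebesgue[OF _ has_integral_exp_minus_to_infinity[OF assms, of 0]]
    by auto
  have "(\<integral>\<^sup>+x. ennreal (exp (- (a * \<bar>x\<bar>))) \<partial>lborel) \<le> (\<integral>\<^sup>+x. g x + g (0 + (-1) * x) \<partial>lborel)"
    by (intro nn_integral_mono) (auto simp: g_def indicator_def abs_if)
  also have "\<dots> = (\<integral>\<^sup>+x. g x \<partial>lborel) + (\<integral>\<^sup>+x. g (0 + (-1) * x) \<partial>lborel)"
    by (intro nn_integral_add) auto
  also have "(\<integral>\<^sup>+x. g (0 + (-1) * x) \<partial>lborel) = (\<integral>\<^sup>+x. g x \<partial>lborel)"
    using nn_integral_real_affine[of g "-1" 0] by simp
  finally show ?thesis
    using assms by (simp add: g ennreal_plus[symmetric] del: ennreal_plus)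
qed

lemma integrable_exp_neg_abs: "integrable lborel (\<lambda>x::real. exp (- \<bar>x\<bar>))"
proof (rule integrableI_bounded)
  have "(\<integral>\<^sup>+x. ennreal (exp (- \<bar>x\<bar>)) \<partial>lborel) \<le> 2"
    using nn_integral_exp_neg_abs_le[of 1] by simp
  then show "(\<integral>\<^sup>+x. ennreal (norm (exp (- \<bar>x::real\<bar>))) \<partial>lborel) < \<infinity>"
    by (simp add: le_less_trans)
qed simp

lemma quartic_bounded_above:
  fixes a B D :: real
  assumes "a > 0"
  shows "-a * l^4 + B * l^2 + D * \<bar>l\<bar> \<le> \<bar>B\<bar> + \<bar>D\<bar> + (\<bar>B\<bar> + \<bar>D\<bar>)^2 / (4 * a)"
proof -
  define M where "M = \<bar>B\<bar> + \<bar>D\<bar>"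
  have "0 \<le> (\<bar>l\<bar> - 1)^2" by simp
  then have "\<bar>l\<bar> \<le> 1 + l^2"
    by (simp add: power2_eq_square algebra_simps)
  then have "D * \<bar>l\<bar> \<le> \<bar>D\<bar> * (1 + l^2)"
    by (meson abs_ge_self abs_ge_zero mult_mono order.trans)
  moreover have "B * l^2 \<le> \<bar>B\<bar> * l^2"
    by (simp add: mult_right_mono)
  moreover have "M * l^2 \<le> a * l^4 + M^2 / (4 * a)"
  proof -
    have "0 \<le> (2 * a * l^2 - M)^2" by simp
    then have "4 * a * (M * l^2) \<le> 4 * a * (a * l^4 + M^2 / (4 * a))"
      using assms by (simp add: power2_eq_square algebra_simps power4_eq_xxxx)
    then show ?thesis using assms by simp
  qed
  ultimately show ?thesis
    unfolding M_def distrib_left distrib_right by linarith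
qed

lemma integrable_exp_quartic:
  fixes f :: "real \<Rightarrow> real"
  assumes [measurable]: "f \<in> borel_measurable borel" and "a > 0"
    and f_le: "\<And>l. f l \<le> -a * l^4 + B * l^2 + D * \<bar>l\<bar> + c"
  shows "integrable lborel (\<lambda>l. exp (f l))"
proof (rule Bochner_Integration.integrable_bound)
  define K where "K = \<bar>B\<bar> + \<bar>D + 1\<bar> + (\<bar>B\<bar> + \<bar>D + 1\<bar>)^2 / (4 * a) + c"
  show "integrable lborel (\<lambda>l. exp K * exp (- \<bar>l\<bar>))"
    using integrable_exp_neg_abs by simp
  have "f l \<le> K - \<bar>l\<bar>" for l
    using f_le[of l] quartic_bounded_above[OF \<open>a > 0\<close>, where B = B and D = "D + 1" and l = l]
    unfolding K_def distrib_right by linarith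
  then show "AE l in lborel. norm (exp (f l)) \<le> norm (exp K * exp (- \<bar>l\<bar>))"
    by (simp add: exp_add[symmetric])
qed simp

lemma integral_exp_pos:
  fixes f :: "real \<Rightarrow> real"
  assumes "integrable lborel (\<lambda>l. exp (f l))"
  shows "0 < (LBINT l. exp (f l))"
proof -
  have "(LBINT l. exp (f l)) \<noteq> 0"
    using integral_nonneg_eq_0_iff_AE[OF assms] ae_filter_eq_bot_iff[of lborel]
    by (simp add: trivial_limit_def[symmetric])
  moreover have "0 \<le> (LBINT l. exp (f l))"
    by (auto intro!: integral_nonneg)
  ultimately show ?thesis by linarith
qed

lemma integral_ge_on_interval:
  fixes f :: "real \<Rightarrow> real"
  assumes "integrable lborel f" and "\<And>l. 0 \<le> f l" and "\<And>l. l \<in> {a..a+w} \<Longrightarrow> c \<le> f l"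
    and "0 \<le> w" and "0 \<le> c"
  shows "c * w \<le> (LBINT l. f l)"
proof -
  have "integrable lborel (\<lambda>l. indicator {a..a+w} l * c)"
    using \<open>0 \<le> w\<close> by (intro integrable_mult_left integrable_real_indicator) (auto simp: emeasure_lborel_Icc)
  then have "(LBINT l. indicator {a..a+w} l * c) \<le> (LBINT l. f l)"
    using assms by (intro integral_mono) (auto simp: indicator_def)
  then show ?thesis
    using \<open>0 \<le> w\<close> by (simp add: mult.commute)
qed

section \<open>The quartic and its supporting lines\<close>

definition bq_lip :: "real \<Rightarrow> real \<Rightarrow> real \<Rightarrow> real" where
  "bq_lip p q R = R^3 + \<bar>p\<bar> * R + \<bar>q\<bar>"

lemma bq_lip_nonneg: "0 \<le> R \<Longrightarrow> 0 \<le> bq_lip p q R"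
  unfolding bq_lip_def by simp

lemma bq_lipschitz:
  assumes "\<bar>u\<bar> \<le> R" and "\<bar>v\<bar> \<le> R"
  shows "\<bar>bq p q u - bq p q v\<bar> \<le> bq_lip p q R * \<bar>u - v\<bar>"
proof -
  have cube: "\<bar>s * t * w\<bar> \<le> R^3" if "\<bar>s\<bar> \<le> R" "\<bar>t\<bar> \<le> R" "\<bar>w\<bar> \<le> R" for s t w
    using that by (auto simp: abs_mult power3_eq_cube intro!: mult_mono)
  have combine: "\<bar>A / 4 + P / 2 + q\<bar> \<le> X + Y + \<bar>q\<bar>"
    if "\<bar>A\<bar> \<le> 4 * X" and "\<bar>P\<bar> \<le> 2 * Y" for A P X Y :: real
    using that by linarith
  have "\<bar>u * u * u + u * u * v + u * v * v + v * v * v\<bar> \<le> 4 * R^3"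
    using cube[of u u u] cube[of u u v] cube[of u v v] cube[of v v v] assms by linarith
  moreover have "\<bar>p * (u + v)\<bar> \<le> 2 * (\<bar>p\<bar> * R)"
    using assms mult_left_mono[of "\<bar>u + v\<bar>" "2 * R" "\<bar>p\<bar>"] by (simp add: abs_mult mult.left_commute)
  ultimately have slope: "\<bar>(u * u * u + u * u * v + u * v * v + v * v * v) / 4 + p * (u + v) / 2 + q\<bar> \<le> bq_lip p q R"
    unfolding bq_lip_def by (rule combine)
  have "bq p q u - bq p q v = (u - v) * ((u * u * u + u * u * v + u * v * v + v * v * v) / 4 + p * (u + v) / 2 + q)"
    unfolding bq_def power2_eq_square power4_eq_xxxx by (simp add: field_simps)
  then have "\<bar>bq p q u - bq p q v\<bar> = \<bar>u - v\<bar> * \<bar>(u * u * u + u * u * v + u * v * v + v * v * v) / 4 + p * (u + v) / 2 + q\<bar>"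
    by (simp only: abs_mult)
  also have "\<dots> \<le> \<bar>u - v\<bar> * bq_lip p q R"
    using slope by (rule mult_left_mono) simp
  finally show ?thesis
    by (simp only: mult.commute)
qed

lemma bq_tangent_supporting:
  assumes "- p \<le> x^2"
  shows "bq p q x + (x^3 + p * x + q) * (l - x) \<le> bq p q l"
proof -
  have "0 \<le> (l + x)^2 + 2 * x^2 + 2 * p"
    using assms zero_le_power2[of "l + x"] by linarith
  moreover have "bq p q l - (bq p q x + (x^3 + p * x + q) * (l - x)) = (l - x)^2 * (((l + x)^2 + 2 * x^2 + 2 * p) / 4)"
    unfolding bq_def by (simp add: field_simps power2_eq_square power3_eq_cube power4_eq_xxxx)
  ultimately show ?thesis
    by (metis diff_ge_0_iff_ge divide_nonneg_pos zero_le_mult_iff zero_le_power2 zero_less_numeral)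
qed

lemma bq_double_tangent_supporting:
  assumes "x^2 = - p"
  shows "bq p q x + q * (l - x) \<le> bq p q l"
proof -
  have "bq p q l - (bq p q x + q * (l - x)) = (l^2 - x^2)^2 / 4"
    unfolding bq_def using assms by (simp add: field_simps power2_eq_square power4_eq_xxxx)
  then show ?thesis
    by (metis diff_ge_0_iff_ge divide_nonneg_pos zero_less_numeral zero_le_power2)
qed

lemma bq_double_tangent_chord: "bq p q (- x) = bq p q x + q * (- x - x)"
  unfolding bq_def by (simp add: field_simps power2_eq_square power4_eq_xxxx)

lemma bq_supporting_chord:
  assumes "p < 0"
    and "(x = r \<and> \<bar>x\<bar> > sqrt (- p)) \<or> (\<bar>x\<bar> = sqrt (- p) \<and> \<bar>r\<bar> = sqrt (- p))"
  obtains \<eta>\<^sub>0 where "bq p q r = bq p q x + \<eta>\<^sub>0 * (r - x)"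
    and "\<And>l. bq p q x + \<eta>\<^sub>0 * (l - x) \<le> bq p q l"
proof -
  have sqrt_sq: "sqrt (- p)^2 = - p"
    using assms(1) by simp
  consider "r = x" "- p \<le> x^2" | "r = x \<or> r = - x" "x^2 = - p"
  proof (cases "x = r \<and> \<bar>x\<bar> > sqrt (- p)")
    case True
    then have "sqrt (- p)^2 \<le> \<bar>x\<bar>^2"
      using assms(1) by (intro power_mono) auto
    with True sqrt_sq that(1) show ?thesis
      by simp
  next
    case False
    with assms(2) have "\<bar>x\<bar> = sqrt (- p)" "\<bar>r\<bar> = sqrt (- p)"
      by auto
    then have "x^2 = - p" "r = x \<or> r = - x"
      using sqrt_sq by (metis power2_abs, auto simp: abs_if split: if_splits)
    with that(2) show ?thesis
      by blast
  qed
  then show ?thesis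
  proof cases
    case 1
    then show ?thesis
      using that[of "x^3 + p * x + q"] bq_tangent_supporting by simp
  next
    case 2
    then show ?thesis
      using that[of q] bq_double_tangent_supporting[of x p q] bq_double_tangent_chord[of p q x] by auto
  qed
qed

section \<open>The normalising integral\<close>

lemma Nfun_nonneg: "0 \<le> Nfun b \<eta> \<tau>"
  unfolding Nfun_def by (auto intro!: integral_nonneg)

lemma integrable_exp_bq_phase:
  assumes "\<tau> > 0"
  shows "integrable lborel (\<lambda>l. exp (2 * \<tau> * (\<eta> * l - bq p q l)))"
proof (rule integrable_exp_quartic)
  show "(\<lambda>l. 2 * \<tau> * (\<eta> * l - bq p q l)) \<in> borel_measurable borel"
    unfolding bq_def by measurable
  show "\<tau> / 2 > 0" using assms by simp
  fix l :: real
  have "2 * \<tau> * ((\<eta> - q) * l) \<le> 2 * \<tau> * (\<bar>\<eta> - q\<bar> * \<bar>l\<bar>)"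
    using assms by (intro mult_left_mono) (auto simp flip: abs_mult)
  then show "2 * \<tau> * (\<eta> * l - bq p q l) \<le> - (\<tau> / 2) * l^4 + (- \<tau> * p) * l^2 + (2 * \<tau> * \<bar>\<eta> - q\<bar>) * \<bar>l\<bar> + 0"
    unfolding bq_def by (simp add: algebra_simps)
qed

lemma Nfun_bq_pos: "\<tau> > 0 \<Longrightarrow> 0 < Nfun (bq p q) \<eta> \<tau>"
  unfolding Nfun_def by (rule integral_exp_pos[OF integrable_exp_bq_phase])

lemma bq_phase_increment:
  assumes "\<bar>\<mu>\<bar> \<le> R" and "\<bar>l\<bar> \<le> R" and "0 \<le> \<eta> * (l - \<mu>)"
  shows "(\<bar>\<eta>\<bar> - bq_lip p q R) * \<bar>l - \<mu>\<bar> \<le> (\<eta> * l - bq p q l) - (\<eta> * \<mu> - bq p q \<mu>)"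
proof -
  have "\<eta> * (l - \<mu>) = \<bar>\<eta>\<bar> * \<bar>l - \<mu>\<bar>"
    using assms(3) by (simp flip: abs_mult)
  moreover have "bq p q l - bq p q \<mu> \<le> bq_lip p q R * \<bar>l - \<mu>\<bar>"
    using bq_lipschitz[OF assms(2,1), of p q] by linarith
  ultimately show ?thesis
    by (simp add: algebra_simps)
qed

lemma Nfun_bq_ge_near:
  assumes "\<tau> > 0" and "\<bar>\<mu>\<bar> + 1 \<le> R"
  shows "exp (2 * \<tau> * (\<eta> * \<mu> - bq p q \<mu>)) * exp (- 2 * bq_lip p q R) / (1 + \<tau>) \<le> Nfun (bq p q) \<eta> \<tau>"
proof -
  define L where "L = bq_lip p q R"
  define w where "w = 1 / (1 + \<tau>)"
  define a where "a = (if 0 \<le> \<eta> then \<mu> else \<mu> - w)"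
  have "0 \<le> L" unfolding L_def using assms by (intro bq_lip_nonneg) simp
  have w: "0 < w" "w \<le> 1" "\<tau> * w \<le> 1"
    using assms(1) unfolding w_def by (auto simp: field_simps)
  have "exp (2 * \<tau> * (\<eta> * \<mu> - bq p q \<mu>)) * exp (- 2 * L) \<le> exp (2 * \<tau> * (\<eta> * l - bq p q l))"
    if "l \<in> {a..a+w}" for l
  proof -
    have l: "\<bar>l - \<mu>\<bar> \<le> w" "0 \<le> \<eta> * (l - \<mu>)"
      using that by (auto simp: a_def split: if_splits intro: mult_nonneg_nonneg mult_nonpos_nonpos)
    have "- (L * w) \<le> - (L * \<bar>l - \<mu>\<bar>)"
      using l(1) \<open>0 \<le> L\<close> by (simp add: mult_left_mono)
    also have "\<dots> \<le> (\<bar>\<eta>\<bar> - L) * \<bar>l - \<mu>\<bar>"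
      by (simp add: algebra_simps)
    also have "\<dots> \<le> (\<eta> * l - bq p q l) - (\<eta> * \<mu> - bq p q \<mu>)"
      unfolding L_def using l assms(2) \<open>w \<le> 1\<close> by (intro bq_phase_increment) auto
    finally have incr: "2 * \<tau> * (- (L * w)) \<le> 2 * \<tau> * ((\<eta> * l - bq p q l) - (\<eta> * \<mu> - bq p q \<mu>))"
      using assms(1) by (intro mult_left_mono) auto
    have "(\<tau> * w) * L \<le> L"
      using w \<open>0 \<le> L\<close> mult_right_mono[of "\<tau> * w" 1 L] by simp
    with incr have "2 * \<tau> * (\<eta> * \<mu> - bq p q \<mu>) + - 2 * L \<le> 2 * \<tau> * (\<eta> * l - bq p q l)"
      by (simp add: algebra_simps)
    then show ?thesis
      by (simp flip: exp_add)
  qed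
  then have "exp (2 * \<tau> * (\<eta> * \<mu> - bq p q \<mu>)) * exp (- 2 * L) * w \<le> Nfun (bq p q) \<eta> \<tau>"
    unfolding Nfun_def using w integrable_exp_bq_phase[OF assms(1)] by (intro integral_ge_on_interval) auto
  then show ?thesis
    unfolding L_def w_def by simp
qed

lemma Nfun_bq_ge_far:
  assumes "\<tau> > 0" and "\<bar>\<mu>\<bar> + 2 \<le> R" and "2 * bq_lip p q R \<le> \<bar>\<eta>\<bar>"
  shows "exp (2 * \<tau> * (\<eta> * \<mu> - bq p q \<mu>)) * exp (\<tau> * \<bar>\<eta>\<bar>) \<le> Nfun (bq p q) \<eta> \<tau>"
proof -
  define L where "L = bq_lip p q R"
  define a where "a = (if 0 \<le> \<eta> then \<mu> + 1 else \<mu> - 2)"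
  have "0 \<le> L" unfolding L_def using assms by (intro bq_lip_nonneg) simp
  have "exp (2 * \<tau> * (\<eta> * \<mu> - bq p q \<mu>)) * exp (\<tau> * \<bar>\<eta>\<bar>) \<le> exp (2 * \<tau> * (\<eta> * l - bq p q l))"
    if "l \<in> {a..a+1}" for l
  proof -
    have l: "1 \<le> \<bar>l - \<mu>\<bar>" "\<bar>l - \<mu>\<bar> \<le> 2" "0 \<le> \<eta> * (l - \<mu>)"
      using that by (auto simp: a_def split: if_splits intro: mult_nonneg_nonneg mult_nonpos_nonpos)
    have "\<bar>\<eta>\<bar> / 2 \<le> (\<bar>\<eta>\<bar> - L) * 1"
      using assms(3) unfolding L_def by simp
    also have "\<dots> \<le> (\<bar>\<eta>\<bar> - L) * \<bar>l - \<mu>\<bar>"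
      using l(1) assms(3) \<open>0 \<le> L\<close> unfolding L_def by (intro mult_left_mono) auto
    also have "\<dots> \<le> (\<eta> * l - bq p q l) - (\<eta> * \<mu> - bq p q \<mu>)"
      unfolding L_def using l assms(2) by (intro bq_phase_increment) auto
    finally have "2 * \<tau> * (\<bar>\<eta>\<bar> / 2) \<le> 2 * \<tau> * ((\<eta> * l - bq p q l) - (\<eta> * \<mu> - bq p q \<mu>))"
      using assms(1) by (intro mult_left_mono) auto
    then have "2 * \<tau> * (\<eta> * \<mu> - bq p q \<mu>) + \<tau> * \<bar>\<eta>\<bar> \<le> 2 * \<tau> * (\<eta> * l - bq p q l)"
      by (simp add: algebra_simps)
    then show ?thesis
      by (simp flip: exp_add)
  qed
  then have "exp (2 * \<tau> * (\<eta> * \<mu> - bq p q \<mu>)) * exp (\<tau> * \<bar>\<eta>\<bar>) * 1 \<le> Nfun (bq p q) \<eta> \<tau>"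
    unfolding Nfun_def using integrable_exp_bq_phase[OF assms(1)] by (intro integral_ge_on_interval) auto
  then show ?thesis
    by simp
qed

lemma Nfun_bq_le_near_supporting_slope:
  assumes chord: "bq p q r = bq p q x + \<eta>\<^sub>0 * (r - x)"
    and supporting: "\<And>l. bq p q x + \<eta>\<^sub>0 * (l - x) \<le> bq p q l"
  obtains C where "0 < C"
    and "\<And>\<tau> \<eta>. 1 \<le> \<tau> \<Longrightarrow> \<bar>\<eta> - \<eta>\<^sub>0\<bar> * \<tau> \<le> 1 \<Longrightarrow>
           Nfun (bq p q) \<eta> \<tau> \<le> C * exp (\<tau> * (\<eta> * (x + r) - bq p q x - bq p q r))"
proof -
  define m where "m = (x + r) / 2"
  define g where "g l = bq p q l - bq p q x - \<eta>\<^sub>0 * (l - x)" for l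
  define C where "C = (LBINT l. exp (2 * \<bar>l - m\<bar> - 2 * g l))"
  have integrable: "integrable lborel (\<lambda>l. exp (2 * \<bar>l - m\<bar> - 2 * g l))"
  proof (rule integrable_exp_quartic)
    show "(\<lambda>l. 2 * \<bar>l - m\<bar> - 2 * g l) \<in> borel_measurable borel"
      unfolding g_def bq_def by measurable
    fix l :: real
    have "- ((q - \<eta>\<^sub>0) * l) \<le> \<bar>q - \<eta>\<^sub>0\<bar> * \<bar>l\<bar>"
      by (metis abs_ge_minus_self abs_mult)
    moreover have "\<bar>l - m\<bar> \<le> \<bar>l\<bar> + \<bar>m\<bar>"
      by (rule abs_triangle_ineq4)
    ultimately show "2 * \<bar>l - m\<bar> - 2 * g l
        \<le> - (1 / 2) * l^4 + (- p) * l^2 + (2 + 2 * \<bar>q - \<eta>\<^sub>0\<bar>) * \<bar>l\<bar> + (2 * \<bar>m\<bar> + 2 * bq p q x - 2 * \<eta>\<^sub>0 * x)"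
      unfolding g_def bq_def by (simp add: algebra_simps)
  qed simp
  have "Nfun (bq p q) \<eta> \<tau> \<le> C * exp (\<tau> * (\<eta> * (x + r) - bq p q x - bq p q r))"
    if "1 \<le> \<tau>" and "\<bar>\<eta> - \<eta>\<^sub>0\<bar> * \<tau> \<le> 1" for \<tau> \<eta>
  proof -
    define n where "n = exp (\<tau> * (\<eta> * (x + r) - bq p q x - bq p q r))"
    have "exp (2 * \<tau> * (\<eta> * l - bq p q l)) \<le> n * exp (2 * \<bar>l - m\<bar> - 2 * g l)" for l
    proof -
      have "2 * \<tau> * (\<eta> * l - bq p q l) = \<tau> * (\<eta> * (x + r) - bq p q x - bq p q r)
              + 2 * (\<tau> * (\<eta> - \<eta>\<^sub>0) * (l - m)) - 2 * (\<tau> * g l)"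
        unfolding m_def g_def chord by (simp add: field_simps)
      moreover have "\<tau> * (\<eta> - \<eta>\<^sub>0) * (l - m) \<le> \<bar>l - m\<bar>"
      proof -
        have "\<tau> * (\<eta> - \<eta>\<^sub>0) * (l - m) \<le> (\<bar>\<eta> - \<eta>\<^sub>0\<bar> * \<tau>) * \<bar>l - m\<bar>"
          using \<open>1 \<le> \<tau>\<close> by (simp add: abs_mult mult.commute flip: abs_mult)
        also have "\<dots> \<le> \<bar>l - m\<bar>"
          using that(2) mult_right_mono[of _ 1 "\<bar>l - m\<bar>"] by simp
        finally show ?thesis .
      qed
      moreover have "g l \<le> \<tau> * g l"
        using \<open>1 \<le> \<tau>\<close> supporting[of l] unfolding g_def by (simp add: mult_le_cancel_right1)
      ultimately show ?thesis
        unfolding n_def by (simp flip: exp_add)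
    qed
    then have "Nfun (bq p q) \<eta> \<tau> \<le> (LBINT l. n * exp (2 * \<bar>l - m\<bar> - 2 * g l))"
      unfolding Nfun_def using \<open>1 \<le> \<tau>\<close> integrable
      by (intro integral_mono integrable_exp_bq_phase) auto
    then show ?thesis
      unfolding C_def n_def by (simp add: mult.commute)
  qed
  moreover have "0 < C"
    unfolding C_def using integrable by (rule integral_exp_pos)
  ultimately show ?thesis
    using that by blast
qed

section \<open>The kernel integrand\<close>

definition szego_density :: "(real \<Rightarrow> real) \<Rightarrow> real \<Rightarrow> real \<Rightarrow> real \<Rightarrow> real \<Rightarrow> real \<Rightarrow> real" where
  "szego_density b x r \<delta> \<tau> \<eta> = \<tau> * exp (\<tau> * (\<eta> * (x + r) - b x - b r - \<delta>)) / Nfun b \<eta> \<tau>"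

definition szego_mass :: "(real \<Rightarrow> real) \<Rightarrow> real \<Rightarrow> real \<Rightarrow> real \<Rightarrow> ennreal" where
  "szego_mass b x r \<delta> =
     (\<integral>\<^sup>+v. indicator {v. 0 < fst v} v * ennreal (szego_density b x r \<delta> (fst v) (snd v)) \<partial>(lborel \<Otimes>\<^sub>M lborel))"

lemma szego_density_nonneg: "0 \<le> \<tau> \<Longrightarrow> 0 \<le> szego_density b x r \<delta> \<tau> \<eta>"
  unfolding szego_density_def using Nfun_nonneg by simp

lemma szego_density_measurable [measurable]:
  "(\<lambda>v. szego_density (bq p q) x r \<delta> (fst v) (snd v)) \<in> borel_measurable (lborel \<Otimes>\<^sub>M lborel)"
  unfolding szego_density_def Nfun_def bq_def by measurable

lemma szego_density_eq:
  "szego_density b x r \<delta> \<tau> \<eta> = \<tau> * exp (- (\<delta> * \<tau>)) * (exp (\<tau> * (\<eta> * (x + r) - b x - b r)) / Nfun b \<eta> \<tau>)"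
  unfolding szego_density_def by (simp add: algebra_simps flip: exp_add)

lemma bdry_integrand_eq_szego_density:
  "bdry_integrand b (x, 0, 0) (r, 0, 0) (\<tau>, \<eta>) = complex_of_real (szego_density b x r 0 \<tau> \<eta>)"
proof -
  have "complex_of_real \<tau> * (\<i> * complex_of_real (0 - 0) + \<i> * complex_of_real (\<eta> * (0 - 0))
            - complex_of_real (b x + b r - \<eta> * (x + r)))
        = complex_of_real (\<tau> * (\<eta> * (x + r) - b x - b r - 0))"
    by (simp add: algebra_simps)
  then show ?thesis
    unfolding bdry_integrand_def szego_density_def by (simp only: prod.case exp_of_real) simp
qed

lemma nn_integral_bdry_integrand:
  assumes "0 \<le> c"
  shows "(\<integral>\<^sup>+v. indicator {v. 0 < fst v} v * ennreal (c * Re (bdry_integrand (bq p q) (x, 0, 0) (r, 0, 0) v)) \<partial>(lborel \<Otimes>\<^sub>M lborel))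
           = ennreal c * szego_mass (bq p q) x r 0"
  unfolding szego_mass_def using assms
  by (subst nn_integral_cmult[symmetric])
     (auto simp: bdry_integrand_eq_szego_density ennreal_mult' mult_ac split: prod.split intro!: nn_integral_cong)

lemma szego_integrand_eq_szego_density:
  "(case v of (\<tau>, \<eta>) \<Rightarrow> complex_of_real \<tau> *
     exp (complex_of_real (\<eta> * \<tau>) * (complex_of_real x + cnj (complex_of_real r))
          + \<i> * complex_of_real \<tau> * (\<i> * complex_of_real (b x + h) - cnj (\<i> * complex_of_real (b r + k))))
     / complex_of_real (Nfun b \<eta> \<tau>))
   = complex_of_real (szego_density b x r (h + k) (fst v) (snd v))"
proof -
  obtain \<tau> \<eta> where v: "v = (\<tau>, \<eta>)"
    by (cases v)
  have "complex_of_real (\<eta> * \<tau>) * (complex_of_real x + cnj (complex_of_real r))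
          + \<i> * complex_of_real \<tau> * (\<i> * complex_of_real (b x + h) - cnj (\<i> * complex_of_real (b r + k)))
        = complex_of_real (\<tau> * (\<eta> * (x + r) - b x - b r - (h + k)))"
    by (simp add: complex_eq_iff algebra_simps)
  then show ?thesis
    unfolding szego_density_def v by (simp only: prod.case fst_conv snd_conv exp_of_real) simp
qed

lemma szego_eq_szego_mass:
  "szego c (bq p q) (complex_of_real x, \<i> * complex_of_real (bq p q x + h))
                    (complex_of_real r, \<i> * complex_of_real (bq p q r + k))
     = complex_of_real (c * enn2real (szego_mass (bq p q) x r (h + k)))"
proof -
  let ?f = "\<lambda>v. indicator {v. 0 < fst v} v * szego_density (bq p q) x r (h + k) (fst v) (snd v)"
  have "szego c (bq p q) (complex_of_real x, \<i> * complex_of_real (bq p q x + h))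
                         (complex_of_real r, \<i> * complex_of_real (bq p q r + k))
          = complex_of_real c * integral\<^sup>L (lborel \<Otimes>\<^sub>M lborel) (\<lambda>v. complex_of_real (?f v))"
    unfolding szego_def set_lebesgue_integral_def fst_conv snd_conv szego_integrand_eq_szego_density
    by (simp add: scaleR_conv_of_real)
  also have "integral\<^sup>L (lborel \<Otimes>\<^sub>M lborel) (\<lambda>v. complex_of_real (?f v)) = complex_of_real (enn2real (szego_mass (bq p q) x r (h + k)))"
    unfolding integral_complex_of_real szego_mass_def
    by (subst integral_eq_nn_integral)
       (auto simp: szego_density_nonneg indicator_mult_ennreal intro!: AE_I2 split: split_indicator)
  finally show ?thesis
    by simp
qed

section \<open>Convergence inside the domain\<close>

definition szego_majorant :: "real \<Rightarrow> real \<Rightarrow> real \<Rightarrow> real \<Rightarrow> real" where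
  "szego_majorant L \<delta> \<tau> \<eta> = \<tau> * exp (- (\<delta> * \<tau>)) *
     (if \<bar>\<eta>\<bar> \<le> 2 * L then (1 + \<tau>) * exp (2 * L) else exp (- (\<tau> * \<bar>\<eta>\<bar>)))"

lemma szego_density_le_majorant:
  assumes "0 < \<tau>" and "\<bar>x\<bar> + 2 \<le> R" and "\<bar>r\<bar> + 2 \<le> R"
  shows "szego_density (bq p q) x r \<delta> \<tau> \<eta> \<le> szego_majorant (bq_lip p q R) \<delta> \<tau> \<eta>"
proof -
  define L where "L = bq_lip p q R"
  define n where "n = exp (\<tau> * (\<eta> * (x + r) - bq p q x - bq p q r))"
  define N where "N = Nfun (bq p q) \<eta> \<tau>"
  define \<phi> where "\<phi> l = \<eta> * l - bq p q l" for l
  obtain \<mu> where "\<bar>\<mu>\<bar> + 2 \<le> R" and "\<phi> x \<le> \<phi> \<mu>" and "\<phi> r \<le> \<phi> \<mu>"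
    using assms(2,3) by (cases "\<phi> r \<le> \<phi> x") auto
  then have "\<tau> * (\<phi> x + \<phi> r) \<le> \<tau> * (2 * \<phi> \<mu>)"
    using assms(1) by (intro mult_left_mono) auto
  then have n_le: "n \<le> exp (2 * \<tau> * (\<eta> * \<mu> - bq p q \<mu>))"
    unfolding n_def \<phi>_def by (simp add: algebra_simps)
  have "0 < N" unfolding N_def using assms(1) by (rule Nfun_bq_pos)
  have "n / N \<le> (if \<bar>\<eta>\<bar> \<le> 2 * L then (1 + \<tau>) * exp (2 * L) else exp (- (\<tau> * \<bar>\<eta>\<bar>)))"
  proof (cases "\<bar>\<eta>\<bar> \<le> 2 * L")
    case True
    have "n * exp (- 2 * L) / (1 + \<tau>) \<le> N"
      using Nfun_bq_ge_near[OF assms(1), of \<mu> R \<eta> p q] \<open>\<bar>\<mu>\<bar> + 2 \<le> R\<close> n_le assms(1)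
      unfolding N_def L_def by (smt (verit) divide_right_mono exp_ge_zero mult_right_mono)
    then have "n * exp (- 2 * L) \<le> N * (1 + \<tau>)"
      using assms(1) by (simp add: pos_divide_le_eq)
    then have "n \<le> N * ((1 + \<tau>) * exp (2 * L))"
      by (simp add: exp_minus field_simps)
    then show ?thesis
      using True \<open>0 < N\<close> by (simp add: pos_divide_le_eq mult.commute)
  next
    case False
    have "n * exp (\<tau> * \<bar>\<eta>\<bar>) \<le> N"
      using Nfun_bq_ge_far[OF assms(1) \<open>\<bar>\<mu>\<bar> + 2 \<le> R\<close>, of p q \<eta>] False n_le
      unfolding N_def L_def by (smt (verit) exp_ge_zero mult_right_mono)
    then show ?thesis
      using False \<open>0 < N\<close> by (simp add: field_simps exp_minus)
  qed
  then show ?thesis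
    using assms(1) unfolding szego_density_eq szego_majorant_def n_def N_def L_def
    by (intro mult_left_mono) auto
qed

lemma poly_le_exp:
  fixes \<epsilon> t :: real
  assumes "0 < \<epsilon>" and "0 \<le> t"
  shows "t * (1 + t) \<le> (1 / \<epsilon> + 4 / \<epsilon>^2) * exp (\<epsilon> * t)"
proof -
  define s where "s = \<epsilon> * t"
  have "0 \<le> s" unfolding s_def using assms by simp
  have "s \<le> exp s"
    using exp_ge_add_one_self[of s] by linarith
  then have t_le: "t \<le> (1 / \<epsilon>) * exp s"
    using assms(1) by (simp add: s_def field_simps)
  have "s / 2 \<le> exp (s / 2)"
    using exp_ge_add_one_self[of "s / 2"] by linarith
  then have "(s / 2)^2 \<le> exp (s / 2)^2"
    using \<open>0 \<le> s\<close> by (intro power_mono) auto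
  then have "t^2 \<le> (4 / \<epsilon>^2) * exp s"
    using assms(1) by (simp add: s_def power2_eq_square field_simps flip: exp_add)
  with t_le show ?thesis
    unfolding s_def by (simp add: algebra_simps power2_eq_square)
qed

lemma nn_integral_szego_majorant_slice:
  assumes "0 < \<tau>" and "0 \<le> L"
  shows "(\<integral>\<^sup>+\<eta>. ennreal (szego_majorant L \<delta> \<tau> \<eta>) \<partial>lborel)
           \<le> ennreal (4 * L * (\<tau> * (1 + \<tau>) * exp (2 * L) * exp (- (\<delta> * \<tau>))) + 2 * exp (- (\<delta> * \<tau>)))"
proof -
  define A where "A = \<tau> * (1 + \<tau>) * exp (2 * L) * exp (- (\<delta> * \<tau>))"
  define B where "B = \<tau> * exp (- (\<delta> * \<tau>))"
  have "0 \<le> A" "0 \<le> B"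
    using assms unfolding A_def B_def by auto
  have "(\<integral>\<^sup>+\<eta>. ennreal (szego_majorant L \<delta> \<tau> \<eta>) \<partial>lborel)
      \<le> (\<integral>\<^sup>+\<eta>. ennreal A * indicator {-(2 * L)..2 * L} \<eta> + ennreal B * ennreal (exp (- (\<tau> * \<bar>\<eta>\<bar>))) \<partial>lborel)"
    using assms \<open>0 \<le> A\<close> unfolding szego_majorant_def
    by (intro nn_integral_mono) (auto simp: A_def B_def indicator_def abs_le_iff ennreal_mult''[symmetric] mult_ac)
  also have "\<dots> = ennreal A * ennreal (4 * L) + ennreal B * (\<integral>\<^sup>+\<eta>. ennreal (exp (- (\<tau> * \<bar>\<eta>\<bar>))) \<partial>lborel)"
    using assms(2)
    by (simp add: nn_integral_add nn_integral_cmult nn_integral_cmult_indicator emeasure_lborel_Icc)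
  also have "\<dots> \<le> ennreal A * ennreal (4 * L) + ennreal B * ennreal (2 / \<tau>)"
    using nn_integral_exp_neg_abs_le[OF assms(1)] by (intro add_left_mono mult_left_mono) auto
  also have "\<dots> = ennreal (4 * L * A + 2 * exp (- (\<delta> * \<tau>)))"
    using assms \<open>0 \<le> A\<close> \<open>0 \<le> B\<close>
    by (simp add: B_def ennreal_mult[symmetric] ennreal_plus[symmetric] del: ennreal_plus)
  finally show ?thesis
    unfolding A_def .
qed

lemma szego_majorant_measurable [measurable]:
  "(\<lambda>v. szego_majorant L \<delta> (fst v) (snd v)) \<in> borel_measurable (lborel \<Otimes>\<^sub>M lborel)"
  unfolding szego_majorant_def by measurable

lemma nn_integral_szego_majorant_finite:
  assumes "0 < \<delta>" and "0 \<le> L"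
  shows "(\<integral>\<^sup>+v. indicator {v. 0 < fst v} v * ennreal (szego_majorant L \<delta> (fst v) (snd v)) \<partial>(lborel \<Otimes>\<^sub>M lborel)) < \<infinity>"
proof -
  define C where "C = 4 * L * exp (2 * L) * (2 / \<delta> + 16 / \<delta>^2) + 2"
  have slice: "(\<integral>\<^sup>+\<eta>. indicator {v. 0 < fst v} (\<tau>, \<eta>) * ennreal (szego_majorant L \<delta> \<tau> \<eta>) \<partial>lborel)
                 \<le> ennreal C * ennreal (exp (- (\<delta> / 2 * \<bar>\<tau>\<bar>)))" for \<tau>
  proof (cases "0 < \<tau>")
    case True
    have "4 * L * (\<tau> * (1 + \<tau>) * exp (2 * L) * exp (- (\<delta> * \<tau>)))
            \<le> 4 * L * (exp (2 * L) * ((2 / \<delta> + 16 / \<delta>^2) * exp (\<delta> / 2 * \<tau>)) * exp (- (\<delta> * \<tau>)))"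
      using poly_le_exp[of "\<delta> / 2" \<tau>] assms True
      by (intro mult_left_mono mult_right_mono) (auto simp: power_divide)
    also have "\<dots> = 4 * L * exp (2 * L) * (2 / \<delta> + 16 / \<delta>^2) * exp (- (\<delta> / 2 * \<tau>))"
      by (simp add: mult_ac flip: exp_add)
    finally have "4 * L * (\<tau> * (1 + \<tau>) * exp (2 * L) * exp (- (\<delta> * \<tau>))) + 2 * exp (- (\<delta> * \<tau>))
                    \<le> 4 * L * exp (2 * L) * (2 / \<delta> + 16 / \<delta>^2) * exp (- (\<delta> / 2 * \<tau>)) + 2 * exp (- (\<delta> / 2 * \<tau>))"
      using True assms(1) by (intro add_mono) auto
    also have "\<dots> = C * exp (- (\<delta> / 2 * \<bar>\<tau>\<bar>))"
      using True unfolding C_def by (simp add: algebra_simps)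
    finally have "4 * L * (\<tau> * (1 + \<tau>) * exp (2 * L) * exp (- (\<delta> * \<tau>))) + 2 * exp (- (\<delta> * \<tau>))
                    \<le> C * exp (- (\<delta> / 2 * \<bar>\<tau>\<bar>))" .
    then have "(\<integral>\<^sup>+\<eta>. ennreal (szego_majorant L \<delta> \<tau> \<eta>) \<partial>lborel) \<le> ennreal (C * exp (- (\<delta> / 2 * \<bar>\<tau>\<bar>)))"
      using nn_integral_szego_majorant_slice[OF True assms(2), of \<delta>] by (blast intro: order_trans ennreal_leI)
    then show ?thesis
      using True assms by (simp add: ennreal_mult C_def)
  qed simp
  have "(\<integral>\<^sup>+v. indicator {v. 0 < fst v} v * ennreal (szego_majorant L \<delta> (fst v) (snd v)) \<partial>(lborel \<Otimes>\<^sub>M lborel))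
          = (\<integral>\<^sup>+\<tau>. (\<integral>\<^sup>+\<eta>. indicator {v. 0 < fst v} (\<tau>, \<eta>) * ennreal (szego_majorant L \<delta> \<tau> \<eta>) \<partial>lborel) \<partial>lborel)"
    by (subst lborel.nn_integral_fst[symmetric]) auto
  also have "\<dots> \<le> (\<integral>\<^sup>+\<tau>. ennreal C * ennreal (exp (- (\<delta> / 2 * \<bar>\<tau>\<bar>))) \<partial>lborel)"
    by (intro nn_integral_mono slice)
  also have "\<dots> = ennreal C * (\<integral>\<^sup>+\<tau>. ennreal (exp (- (\<delta> / 2 * \<bar>\<tau>\<bar>))) \<partial>lborel)"
    by (rule nn_integral_cmult) measurable
  also have "\<dots> \<le> ennreal C * ennreal (2 / (\<delta> / 2))"
    using assms(1) by (intro mult_left_mono nn_integral_exp_neg_abs_le) auto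
  also have "\<dots> < \<infinity>"
    by (simp add: ennreal_mult_less_top)
  finally show ?thesis .
qed

lemma szego_mass_finite:
  assumes "0 < \<delta>"
  shows "szego_mass (bq p q) x r \<delta> < \<infinity>"
proof -
  define R where "R = \<bar>x\<bar> + \<bar>r\<bar> + 2"
  have "szego_mass (bq p q) x r \<delta>
          \<le> (\<integral>\<^sup>+v. indicator {v. 0 < fst v} v * ennreal (szego_majorant (bq_lip p q R) \<delta> (fst v) (snd v)) \<partial>(lborel \<Otimes>\<^sub>M lborel))"
    unfolding szego_mass_def
    by (intro nn_integral_mono) (auto simp: indicator_def R_def intro!: ennreal_leI szego_density_le_majorant)
  also have "\<dots> < \<infinity>"
    using assms by (intro nn_integral_szego_majorant_finite bq_lip_nonneg) (simp_all add: R_def)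
  finally show ?thesis .
qed

section \<open>Divergence at the boundary\<close>

lemma ennreal_eq_top_of_linear_lower_bound:
  fixes X :: ennreal
  assumes "0 < a" and "\<And>T. 1 \<le> T \<Longrightarrow> ennreal (a * (T - 1)) \<le> X"
  shows "X = \<infinity>"
proof (rule ccontr)
  assume "X \<noteq> \<infinity>"
  then obtain y where "0 \<le> y" and "X = ennreal y"
    using ennreal_cases[of X] by auto
  have "ennreal (a * ((1 + (y + 1) / a) - 1)) \<le> X"
    using assms \<open>0 \<le> y\<close> by (intro assms(2)) simp
  moreover have "a * ((1 + (y + 1) / a) - 1) = y + 1"
    using \<open>0 < a\<close> by simp
  ultimately show False
    using \<open>0 \<le> y\<close> \<open>X = ennreal y\<close> by (simp add: ennreal_le_iff)
qed

lemma filterlim_enn2real_at_right_0: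
  fixes J :: "real \<Rightarrow> ennreal"
  assumes "0 < a" and finite: "\<And>\<delta>. 0 < \<delta> \<Longrightarrow> J \<delta> < \<infinity>"
    and lower: "\<And>\<delta> T. 0 < \<delta> \<Longrightarrow> 1 \<le> T \<Longrightarrow> \<delta> * T \<le> 1 \<Longrightarrow> ennreal (a * (T - 1)) \<le> J \<delta>"
  shows "filterlim (\<lambda>\<delta>. enn2real (J \<delta>)) at_top (at_right 0)"
proof (rule filterlim_at_top_mono)
  show "filterlim (\<lambda>\<delta>. a * (inverse \<delta> - 1)) at_top (at_right (0::real))"
    using \<open>0 < a\<close> filterlim_tendsto_add_at_top[OF tendsto_const[of "-1"] filterlim_inverse_at_top_right]
    by (intro filterlim_tendsto_pos_mult_at_top[OF tendsto_const]) simp_all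
  have "a * (inverse \<delta> - 1) \<le> enn2real (J \<delta>)" if "0 < \<delta>" and "\<delta> \<le> 1" for \<delta>
  proof -
    have "ennreal (a * (1 / \<delta> - 1)) \<le> J \<delta>"
      using that by (intro lower) auto
    then have "enn2real (ennreal (a * (1 / \<delta> - 1))) \<le> enn2real (J \<delta>)"
      by (rule enn2real_mono) (use finite[OF \<open>0 < \<delta>\<close>] in simp)
    moreover have "0 \<le> a * (1 / \<delta> - 1)"
      using that \<open>0 < a\<close> by simp
    ultimately show ?thesis
      by (simp add: divide_inverse)
  qed
  then show "\<forall>\<^sub>F \<delta> in at_right 0. a * (inverse \<delta> - 1) \<le> enn2real (J \<delta>)"
    unfolding eventually_at_right_field by (intro exI[of _ 1]) auto
qed

lemma nn_integral_strip:
  assumes "1 \<le> T"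
  shows "(\<integral>\<^sup>+v. indicator {(\<tau>, \<eta>). 1 \<le> \<tau> \<and> \<tau> \<le> T \<and> \<bar>\<eta> - \<eta>\<^sub>0\<bar> * \<tau> \<le> 1} v * ennreal (fst v)
           \<partial>(lborel \<Otimes>\<^sub>M lborel)) = ennreal (2 * (T - 1))"
proof -
  have slice: "(\<integral>\<^sup>+\<eta>. indicator {(\<tau>, \<eta>). 1 \<le> \<tau> \<and> \<tau> \<le> T \<and> \<bar>\<eta> - \<eta>\<^sub>0\<bar> * \<tau> \<le> 1} (\<tau>, \<eta>) * ennreal \<tau> \<partial>lborel)
                 = 2 * indicator {1..T} \<tau>" for \<tau>
  proof (cases "1 \<le> \<tau> \<and> \<tau> \<le> T")
    case True
    then have "0 < \<tau>" by simp
    have "(\<bar>\<eta> - \<eta>\<^sub>0\<bar> * \<tau> \<le> 1) = (\<eta> \<in> {\<eta>\<^sub>0 - 1 / \<tau>..\<eta>\<^sub>0 + 1 / \<tau>})" for \<eta>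
      using \<open>0 < \<tau>\<close> by (simp add: pos_le_divide_eq[symmetric]) (auto simp: abs_le_iff)
    then have "(\<integral>\<^sup>+\<eta>. indicator {(\<tau>, \<eta>). 1 \<le> \<tau> \<and> \<tau> \<le> T \<and> \<bar>\<eta> - \<eta>\<^sub>0\<bar> * \<tau> \<le> 1} (\<tau>, \<eta>) * ennreal \<tau> \<partial>lborel)
                 = (\<integral>\<^sup>+\<eta>. ennreal \<tau> * indicator {\<eta>\<^sub>0 - 1 / \<tau>..\<eta>\<^sub>0 + 1 / \<tau>} \<eta> \<partial>lborel)"
      using True by (intro nn_integral_cong) (auto simp: indicator_def)
    also have "\<dots> = ennreal \<tau> * ennreal (2 / \<tau>)"
      using \<open>0 < \<tau>\<close> by (simp add: nn_integral_cmult_indicator emeasure_lborel_Icc)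
    also have "\<dots> = 2"
      using \<open>0 < \<tau>\<close> by (simp flip: ennreal_mult)
    finally show ?thesis
      using True by simp
  qed (auto simp: indicator_def)
  have "(\<integral>\<^sup>+v. indicator {(\<tau>, \<eta>). 1 \<le> \<tau> \<and> \<tau> \<le> T \<and> \<bar>\<eta> - \<eta>\<^sub>0\<bar> * \<tau> \<le> 1} v * ennreal (fst v) \<partial>(lborel \<Otimes>\<^sub>M lborel))
          = (\<integral>\<^sup>+\<tau>. 2 * indicator {1..T} \<tau> \<partial>lborel)"
    by (subst lborel.nn_integral_fst[symmetric]) (auto simp: slice)
  also have "\<dots> = 2 * ennreal (T - 1)"
    using assms by (simp add: nn_integral_cmult_indicator emeasure_lborel_Icc)
  also have "\<dots> = ennreal (2 * (T - 1))"
    using assms by (intro numeral_mult_ennreal) simp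
  finally show ?thesis .
qed

lemma szego_mass_lower_bound:
  assumes chord: "bq p q r = bq p q x + \<eta>\<^sub>0 * (r - x)"
    and supporting: "\<And>l. bq p q x + \<eta>\<^sub>0 * (l - x) \<le> bq p q l"
  obtains a where "0 < a"
    and "\<And>\<delta> T. 0 \<le> \<delta> \<Longrightarrow> 1 \<le> T \<Longrightarrow> \<delta> * T \<le> 1 \<Longrightarrow> ennreal (a * (T - 1)) \<le> szego_mass (bq p q) x r \<delta>"
proof -
  obtain C where "0 < C"
    and N_le: "\<And>\<tau> \<eta>. 1 \<le> \<tau> \<Longrightarrow> \<bar>\<eta> - \<eta>\<^sub>0\<bar> * \<tau> \<le> 1 \<Longrightarrow>
                 Nfun (bq p q) \<eta> \<tau> \<le> C * exp (\<tau> * (\<eta> * (x + r) - bq p q x - bq p q r))"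
    using Nfun_bq_le_near_supporting_slope[OF chord supporting] by blast
  define S where "S T = {(\<tau>, \<eta>). 1 \<le> \<tau> \<and> \<tau> \<le> T \<and> \<bar>\<eta> - \<eta>\<^sub>0\<bar> * \<tau> \<le> 1}" for T
  have density_ge: "exp (-1) / C * \<tau> \<le> szego_density (bq p q) x r \<delta> \<tau> \<eta>"
    if "(\<tau>, \<eta>) \<in> S T" and "0 \<le> \<delta>" and "\<delta> * T \<le> 1" for \<delta> T \<tau> \<eta>
  proof -
    define n where "n = exp (\<tau> * (\<eta> * (x + r) - bq p q x - bq p q r))"
    have "1 \<le> \<tau>" "\<tau> \<le> T" "\<bar>\<eta> - \<eta>\<^sub>0\<bar> * \<tau> \<le> 1"
      using that(1) by (auto simp: S_def)
    have "0 < Nfun (bq p q) \<eta> \<tau>"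
      using \<open>1 \<le> \<tau>\<close> by (intro Nfun_bq_pos) simp
    then have "1 / C \<le> n / Nfun (bq p q) \<eta> \<tau>"
      using N_le[OF \<open>1 \<le> \<tau>\<close> \<open>\<bar>\<eta> - \<eta>\<^sub>0\<bar> * \<tau> \<le> 1\<close>] \<open>0 < C\<close>
      by (simp add: n_def divide_le_eq le_divide_eq mult.commute)
    moreover have "exp (-1) \<le> exp (- (\<delta> * \<tau>))"
      using \<open>\<tau> \<le> T\<close> that(2,3) mult_left_mono[of \<tau> T \<delta>] by simp
    ultimately have "\<tau> * exp (-1) * (1 / C) \<le> \<tau> * exp (- (\<delta> * \<tau>)) * (n / Nfun (bq p q) \<eta> \<tau>)"
      using \<open>1 \<le> \<tau>\<close> \<open>0 < C\<close> by (intro mult_mono) auto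
    then show ?thesis
      unfolding szego_density_eq n_def by (simp add: mult.commute)
  qed
  show ?thesis
  proof
    show "0 < 2 * exp (-1) / C"
      using \<open>0 < C\<close> by simp
    fix \<delta> T :: real
    assume "0 \<le> \<delta>" and "1 \<le> T" and "\<delta> * T \<le> 1"
    have "ennreal (2 * exp (-1) / C * (T - 1)) = ennreal (exp (-1) / C) * ennreal (2 * (T - 1))"
      using \<open>0 < C\<close> by (simp add: field_simps flip: ennreal_mult')
    also have "\<dots> = (\<integral>\<^sup>+v. ennreal (exp (-1) / C) * (indicator (S T) v * ennreal (fst v)) \<partial>(lborel \<Otimes>\<^sub>M lborel))"
      unfolding S_def using \<open>1 \<le> T\<close> by (simp add: nn_integral_cmult nn_integral_strip)
    also have "\<dots> \<le> szego_mass (bq p q) x r \<delta>"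
      unfolding szego_mass_def
    proof (intro nn_integral_mono)
      fix v :: "real \<times> real"
      show "ennreal (exp (-1) / C) * (indicator (S T) v * ennreal (fst v))
              \<le> indicator {v. 0 < fst v} v * ennreal (szego_density (bq p q) x r \<delta> (fst v) (snd v))"
        using density_ge[of "fst v" "snd v" T \<delta>] \<open>0 \<le> \<delta>\<close> \<open>\<delta> * T \<le> 1\<close> \<open>0 < C\<close>
        by (cases v) (auto simp: S_def indicator_def ennreal_mult'[symmetric] intro!: ennreal_leI)
    qed
    finally show "ennreal (2 * exp (-1) / C * (T - 1)) \<le> szego_mass (bq p q) x r \<delta>" .
  qed
qed

theorem theorem2p2:
  fixes p q c x r :: real
  assumes hp: "p < 0"
    and hc: "c > 0"
    and hxr: "(x = r \<and> \<bar>x\<bar> > sqrt (- p)) \<or> (\<bar>x\<bar> = sqrt (- p) \<and> \<bar>r\<bar> = sqrt (- p))"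
  shows "(\<forall>\<tau> \<eta>. \<tau> > 0 \<longrightarrow>
            bdry_integrand (bq p q) (x, 0, 0) (r, 0, 0) (\<tau>, \<eta>) \<in> \<real> \<and>
            Re (bdry_integrand (bq p q) (x, 0, 0) (r, 0, 0) (\<tau>, \<eta>)) \<ge> 0)
       \<and> (\<integral>\<^sup>+ v. indicator {v. fst v > 0} v *
              ennreal (c * Re (bdry_integrand (bq p q) (x, 0, 0) (r, 0, 0) v))
            \<partial>(lborel \<Otimes>\<^sub>M lborel)) = \<infinity>
       \<and> filterlim
           (\<lambda>(h, k). szego c (bq p q)
               (complex_of_real x, \<i> * complex_of_real (bq p q x + h))
               (complex_of_real r, \<i> * complex_of_real (bq p q r + k)))
           at_infinity
           (filtercomap (\<lambda>(h, k). h + k) (at_right (0::real)))"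
proof -
  obtain \<eta>\<^sub>0 where chord: "bq p q r = bq p q x + \<eta>\<^sub>0 * (r - x)"
    and supporting: "\<And>l. bq p q x + \<eta>\<^sub>0 * (l - x) \<le> bq p q l"
    using bq_supporting_chord[OF hp hxr] by blast
  obtain a where "0 < a"
    and mass_ge: "\<And>\<delta> T. 0 \<le> \<delta> \<Longrightarrow> 1 \<le> T \<Longrightarrow> \<delta> * T \<le> 1 \<Longrightarrow> ennreal (a * (T - 1)) \<le> szego_mass (bq p q) x r \<delta>"
    using szego_mass_lower_bound[OF chord supporting] by blast
  have "szego_mass (bq p q) x r 0 = \<infinity>"
    using \<open>0 < a\<close> by (rule ennreal_eq_top_of_linear_lower_bound) (simp add: mass_ge)
  moreover have "filterlim (\<lambda>\<delta>. enn2real (szego_mass (bq p q) x r \<delta>)) at_top (at_right 0)"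
    using \<open>0 < a\<close> szego_mass_finite mass_ge by (rule filterlim_enn2real_at_right_0) auto
  then have "filterlim (\<lambda>hk. c * enn2real (szego_mass (bq p q) x r ((\<lambda>(h, k). h + k) hk))) at_top
               (filtercomap (\<lambda>(h, k). h + k) (at_right 0))"
    using hc filterlim_compose[OF _ filterlim_filtercomap]
    by (intro filterlim_tendsto_pos_mult_at_top[OF tendsto_const])
  ultimately show ?thesis
    unfolding filterlim_at_infinity_conv_norm_at_top prod.case_distrib[of norm] szego_eq_szego_mass
    using hc
    by (simp add: bdry_integrand_eq_szego_density szego_density_nonneg nn_integral_bdry_integrand
        ennreal_mult_top case_prod_beta' norm_mult abs_of_nonneg)
qed

end
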